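(* Let $G, G'$ be two distinct spanning trees of $K_{n,d}$ and let $e\in G$, $e'\in G'$ be edges such that $G\setminus e = G'\setminus e' = H$. Let the two connected components of $H$ have vertex sets $I^{(1)}\sqcup \bar J^{(1)}$ and $I^{(2)}\sqcup \bar J^{(2)}$ (with $I^{(k)}\subseteq[n]$, $\bar J^{(k)}\subseteq[\bar d]$). Then $G$ and $G'$ are compatible if and only if either ($e$ joins a vertex of $I^{(1)}$ to a vertex of $\bar J^{(2)}$ and $e'$ joins a vertex of $I^{(2)}$ to a vertex of $\bar J^{(1)}$) or ($e$ joins $I^{(2)}$ to $\bar J^{(1)}$ and $e'$ joins $I^{(1)}$ to $\bar J^{(2)}$). In particular, if $G$ and $G'$ are compatible then $e$ and $e'$ share no vertex.
   Context: Fix positive integers $n,d$. $K_{n,d}$ denotes the complete bipartite graph with left vertex set $[n]=\{1,\dots,n\}$ and right vertex set $[\bar d]=\{\bar 1,\dots,\bar d\}$; all graphs considered are subgraphs of $K_{n,d}$ (identified with their edge sets). Two acyclic subgraphs $G,G'$ of $K_{n,d}$ are called compatible if whenever both $G$ and $G'$ contain a perfect matching between the same pair of vertex sets $I\subseteq[n]$ and $\bar J\subseteq[\bar d]$, these two matchings are equal. *)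

theory Defs
  imports Main
begin

text \<open>Edges of K_{n,d}: pairs (i,j) with i in {1..n} (left vertex i) and j in {1..d}
  (right vertex bar j). A graph is a set of such edges. Vertices are Inl i (left) and Inr j (right).\<close>

type_synonym edge = "nat \<times> nat"
type_synonym vert = "nat + nat"

definition Kedges :: "nat \<Rightarrow> nat \<Rightarrow> edge set" where
  "Kedges n d = {1..n} \<times> {1..d}"

definition Kverts :: "nat \<Rightarrow> nat \<Rightarrow> vert set" where
  "Kverts n d = Inl ` {1..n} \<union> Inr ` {1..d}"

definition vset :: "nat set \<Rightarrow> nat set \<Rightarrow> vert set" where
  "vset I J = Inl ` I \<union> Inr ` J"

definition adj :: "edge set \<Rightarrow> vert \<Rightarrow> vert \<Rightarrow> bool" where
  "adj G u v \<longleftrightarrow> (\<exists>i j. (i, j) \<in> G \<and> ((u = Inl i \<and> v = Inr j) \<or> (u = Inr j \<and> v = Inl i)))"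

definition is_cycle :: "edge set \<Rightarrow> vert list \<Rightarrow> bool" where
  "is_cycle G vs \<longleftrightarrow> length vs \<ge> 3 \<and> distinct vs
     \<and> (\<forall>k. Suc k < length vs \<longrightarrow> adj G (vs ! k) (vs ! Suc k))
     \<and> adj G (last vs) (hd vs)"

definition acyclic_graph :: "edge set \<Rightarrow> bool" where
  "acyclic_graph G \<longleftrightarrow> \<not> (\<exists>vs. is_cycle G vs)"

definition connected_in :: "edge set \<Rightarrow> vert \<Rightarrow> vert \<Rightarrow> bool" where
  "connected_in G u v \<longleftrightarrow> (u, v) \<in> {(x, y). adj G x y}\<^sup>*"

definition spanning_tree :: "nat \<Rightarrow> nat \<Rightarrow> edge set \<Rightarrow> bool" where
  "spanning_tree n d G \<longleftrightarrow> G \<subseteq> Kedges n d \<and> acyclic_graph G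
     \<and> (\<forall>u\<in>Kverts n d. \<forall>v\<in>Kverts n d. connected_in G u v)"

definition components :: "nat \<Rightarrow> nat \<Rightarrow> edge set \<Rightarrow> vert set set" where
  "components n d H = (\<lambda>u. {v \<in> Kverts n d. connected_in H u v}) ` Kverts n d"

definition perfect_matching_in :: "edge set \<Rightarrow> nat set \<Rightarrow> nat set \<Rightarrow> edge set \<Rightarrow> bool" where
  "perfect_matching_in G I J M \<longleftrightarrow> M \<subseteq> G \<and> M \<subseteq> I \<times> J
     \<and> (\<forall>i\<in>I. \<exists>!j. (i, j) \<in> M) \<and> (\<forall>j\<in>J. \<exists>!i. (i, j) \<in> M)"

definition compatible :: "nat \<Rightarrow> nat \<Rightarrow> edge set \<Rightarrow> edge set \<Rightarrow> bool" where
  "compatible n d G G' \<longleftrightarrow> (\<forall>I J M M'. I \<subseteq> {1..n} \<longrightarrow> J \<subseteq> {1..d}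
     \<longrightarrow> perfect_matching_in G I J M \<longrightarrow> perfect_matching_in G' I J M' \<longrightarrow> M = M')"

end

(*
  Write G = H + e and G' = H + e'. Both edges join the two components of the forest H.

  If they join them in opposite directions, say e from I1 to J2 and e' from I2 to J1, count
  across the cut: a perfect matching of G between I and J matches J \<inter> J1 into I \<inter> I1, strictly
  so if it uses e, and a perfect matching of G' matches J \<inter> J2 into I \<inter> I2, strictly so if it
  uses e'.

  If they are parallel, the paths of H joining the left ends of e and e' and joining their
  right ends close up with e and e' to an even cycle; its two alternating perfect matchings
  lie in G and in G' respectively and differ in e.
*)
theory Submission
  imports Defs "HOL-Combinatorics.Orbits"
begin

lemma adj_commute: "adj G u v \<longleftrightarrow> adj G v u"
  unfolding adj_def by blast

lemma adj_mono: "adj H u v \<Longrightarrow> H \<subseteq> G \<Longrightarrow> adj G u v"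
  unfolding adj_def by blast

lemma adj_edge: "(i, j) \<in> G \<Longrightarrow> adj G (Inl i) (Inr j)"
  unfolding adj_def by blast

lemma acyclic_graph_subset: "acyclic_graph G \<Longrightarrow> H \<subseteq> G \<Longrightarrow> acyclic_graph H"
  unfolding acyclic_graph_def is_cycle_def by (meson adj_mono)

lemma Kedges_imp_Kverts: "(i, j) \<in> Kedges n d \<Longrightarrow> Inl i \<in> Kverts n d \<and> Inr j \<in> Kverts n d"
  unfolding Kedges_def Kverts_def by auto

lemma vset_Inl_iff [simp]: "Inl i \<in> vset I J \<longleftrightarrow> i \<in> I"
  and vset_Inr_iff [simp]: "Inr j \<in> vset I J \<longleftrightarrow> j \<in> J"
  unfolding vset_def by auto

lemma connected_in_refl: "connected_in G u u"
  unfolding connected_in_def by simp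

lemma connected_in_trans: "connected_in G u v \<Longrightarrow> connected_in G v w \<Longrightarrow> connected_in G u w"
  unfolding connected_in_def by (fact rtrancl_trans)

lemma connected_in_adj: "adj G u v \<Longrightarrow> connected_in G u v"
  unfolding connected_in_def by auto

lemma connected_in_sym: "connected_in G u v \<Longrightarrow> connected_in G v u"
  unfolding connected_in_def
  by (rule symD[OF sym_rtrancl]) (auto intro: symI simp: adj_commute)

lemma connected_in_insert:
  assumes "connected_in (insert (i, j) H) u v" and "connected_in H (Inl i) (Inr j)"
  shows "connected_in H u v"
  using assms(1) unfolding connected_in_def
proof (induction rule: rtrancl_induct)
  case (step x y)
  have "connected_in H x y"
  proof (cases "adj H x y")
    case False
    with step.hyps(2) have "{x, y} = {Inl i, Inr j}"
      unfolding adj_def by auto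
    then show ?thesis
      using assms(2) connected_in_sym by (auto simp: doubleton_eq_iff)
  qed (rule connected_in_adj)
  with step.IH show ?case
    unfolding connected_in_def by (fact rtrancl_trans)
qed simp

lemma mem_component_iff:
  assumes "C \<in> components n d H" and "u \<in> C"
  shows "v \<in> C \<longleftrightarrow> v \<in> Kverts n d \<and> connected_in H u v"
  using assms unfolding components_def
  by (auto intro: connected_in_trans dest: connected_in_sym)

lemma components_cover:
  assumes "v \<in> Kverts n d"
  shows "\<exists>C \<in> components n d H. v \<in> C"
  using assms unfolding components_def by (auto intro: connected_in_refl)

lemma components_disjoint:
  assumes "C \<in> components n d H" "D \<in> components n d H" and "w \<in> C" "w \<in> D"
  shows "C = D"
  using mem_component_iff[OF assms(1,3)] mem_component_iff[OF assms(2,4)] by blast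

lemma component_nonempty:
  assumes "C \<in> components n d H"
  obtains u where "u \<in> C"
  using assms unfolding components_def by (blast intro: connected_in_refl)

lemma two_components_complement:
  assumes "components n d H = {C, D}" and "C \<noteq> D" and "w \<in> Kverts n d"
  shows "w \<in> D \<longleftrightarrow> w \<notin> C"
proof -
  have "C \<in> components n d H" "D \<in> components n d H"
    using assms(1) by auto
  then show ?thesis
    using components_cover[OF assms(3), of H] components_disjoint assms(1,2) by blast
qed

lemma connected_in_iff_two_components:
  assumes "components n d H = {C, D}" and "C \<noteq> D"
    and "u \<in> Kverts n d" and "v \<in> Kverts n d"
  shows "connected_in H u v \<longleftrightarrow> (u \<in> C \<longleftrightarrow> v \<in> C)"
proof -
  have "C \<in> components n d H" "D \<in> components n d H"
    using assms(1) by auto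
  then show ?thesis
    using mem_component_iff two_components_complement[OF assms(1,2)] assms(3,4) by metis
qed

lemma two_components_not_connected:
  assumes "components n d H = {C, D}" and "C \<noteq> D"
  obtains u v where "u \<in> Kverts n d" "v \<in> Kverts n d" "\<not> connected_in H u v"
proof -
  have C: "C \<in> components n d H" and D: "D \<in> components n d H"
    using assms(1) by auto
  obtain u v where "u \<in> C" "v \<in> D"
    using component_nonempty[OF C] component_nonempty[OF D] by metis
  moreover from this have "u \<in> Kverts n d" "v \<in> Kverts n d"
    using mem_component_iff[OF C] mem_component_iff[OF D] by blast+
  ultimately show thesis
    using two_components_complement[OF assms] connected_in_iff_two_components[OF assms] that
    by blast
qed

lemma two_components_vset_complement:
  assumes "components n d H = {vset I1 J1, vset I2 J2}" "vset I1 J1 \<noteq> vset I2 J2"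
  shows "x \<in> {1..n} \<Longrightarrow> x \<in> I2 \<longleftrightarrow> x \<notin> I1" and "y \<in> {1..d} \<Longrightarrow> y \<in> J2 \<longleftrightarrow> y \<notin> J1"
  using two_components_complement[OF assms, of "Inl x"] two_components_complement[OF assms, of "Inr y"]
  by (auto simp: Kverts_def)

fun walk :: "edge set \<Rightarrow> vert list \<Rightarrow> bool" where
  "walk G (u # v # vs) \<longleftrightarrow> adj G u v \<and> walk G (v # vs)"
| "walk G _ \<longleftrightarrow> True"

lemma walk_Cons: "walk G (u # vs) \<longleftrightarrow> walk G vs \<and> (vs \<noteq> [] \<longrightarrow> adj G u (hd vs))"
  by (cases vs) auto

lemma walk_append:
  "walk G (us @ vs) \<longleftrightarrow> walk G us \<and> walk G vs \<and> (us \<noteq> [] \<longrightarrow> vs \<noteq> [] \<longrightarrow> adj G (last us) (hd vs))"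
  by (induction us) (auto simp: walk_Cons)

lemma walk_rev: "walk G (rev vs) \<longleftrightarrow> walk G vs"
  by (induction vs) (auto simp: walk_append walk_Cons adj_commute last_rev)

lemma walk_mono: "walk H vs \<Longrightarrow> H \<subseteq> G \<Longrightarrow> walk G vs"
  by (induction vs rule: walk.induct) (auto intro: adj_mono)

lemma walk_connected_in: "walk G vs \<Longrightarrow> v \<in> set vs \<Longrightarrow> connected_in G (hd vs) v"
  by (induction vs rule: walk.induct)
    (auto intro: connected_in_refl connected_in_trans connected_in_adj)

lemma walk_odd_length_iff:
  "walk G vs \<Longrightarrow> vs \<noteq> [] \<Longrightarrow> odd (length vs) \<longleftrightarrow> isl (hd vs) = isl (last vs)"
  by (induction vs rule: walk.induct) (auto simp: adj_def)

lemma connected_in_imp_distinct_walk: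
  assumes "connected_in G u v"
  obtains vs where "walk G vs" "distinct vs" "vs \<noteq> []" "hd vs = u" "last vs = v"
proof -
  from assms have "\<exists>vs. walk G vs \<and> distinct vs \<and> vs \<noteq> [] \<and> hd vs = u \<and> last vs = v"
    unfolding connected_in_def
  proof (induction rule: converse_rtrancl_induct)
    case (step u w)
    then obtain vs where vs: "walk G vs" "distinct vs" "vs \<noteq> []" "hd vs = w" "last vs = v"
      by blast
    show ?case
    proof (cases "u \<in> set vs")
      case True
      then obtain ps qs where "vs = ps @ u # qs"
        by (meson split_list)
      with vs show ?thesis
        by (intro exI[of _ "u # qs"]) (auto simp: walk_append)
    next
      case False
      with vs step.hyps(1) show ?thesis
        by (intro exI[of _ "u # vs"]) (auto simp: walk_Cons)
    qed
  qed (auto intro: exI[of _ "[v]"])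
  then show thesis
    using that by blast
qed

lemma perfect_matching_in_iff_bij_betw:
  "perfect_matching_in G I J M \<longleftrightarrow> M \<subseteq> G \<and> bij_betw fst M I \<and> bij_betw snd M J"
  unfolding perfect_matching_in_def bij_betw_def
proof (intro iffI conjI)
  assume "M \<subseteq> G \<and> M \<subseteq> I \<times> J \<and> (\<forall>i\<in>I. \<exists>!j. (i, j) \<in> M) \<and> (\<forall>j\<in>J. \<exists>!i. (i, j) \<in> M)"
  then show "M \<subseteq> G" "inj_on fst M" "fst ` M = I" "inj_on snd M" "snd ` M = J"
    by (force intro!: inj_onI)+
next
  assume M: "M \<subseteq> G \<and> (inj_on fst M \<and> fst ` M = I) \<and> (inj_on snd M \<and> snd ` M = J)"
  then show "M \<subseteq> G" "M \<subseteq> I \<times> J"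
    by force+
  from M have "(i, j) \<in> M \<Longrightarrow> (i, j') \<in> M \<Longrightarrow> j = j'"
    and "(i, j) \<in> M \<Longrightarrow> (i', j) \<in> M \<Longrightarrow> i = i'" for i i' j j'
    by (metis fst_conv snd_conv inj_onD)+
  moreover from M have "i \<in> I \<Longrightarrow> \<exists>j. (i, j) \<in> M" and "j \<in> J \<Longrightarrow> \<exists>i. (i, j) \<in> M" for i j
    by force+
  ultimately show "\<forall>i\<in>I. \<exists>!j. (i, j) \<in> M" "\<forall>j\<in>J. \<exists>!i. (i, j) \<in> M"
    by blast+
qed

lemma perfect_matching_in_insert:
  assumes "perfect_matching_in G I J M" and "(i, j) \<in> G" "i \<notin> I" "j \<notin> J"
  shows "perfect_matching_in G (insert i I) (insert j J) (insert (i, j) M)"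
  using assms unfolding perfect_matching_in_def by auto

lemma perfect_matching_in_partners:
  assumes "perfect_matching_in G I J M"
  obtains \<mu> \<nu> where "bij_betw \<mu> I J" "\<And>i. i \<in> I \<Longrightarrow> (i, \<mu> i) \<in> M"
    and "bij_betw \<nu> J I" "\<And>j. j \<in> J \<Longrightarrow> (\<nu> j, j) \<in> M"
proof
  from assms have fst: "bij_betw fst M I" and snd: "bij_betw snd M J"
    by (simp_all add: perfect_matching_in_iff_bij_betw)
  show "bij_betw (snd \<circ> the_inv_into M fst) I J" "bij_betw (fst \<circ> the_inv_into M snd) J I"
    using bij_betw_trans[OF bij_betw_the_inv_into[OF fst] snd]
      bij_betw_trans[OF bij_betw_the_inv_into[OF snd] fst] .
  show "(i, (snd \<circ> the_inv_into M fst) i) \<in> M" if "i \<in> I" for i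
    using bij_betw_apply[OF bij_betw_the_inv_into[OF fst] that]
      f_the_inv_into_f_bij_betw[OF fst that] by (metis comp_apply prod.collapse)
  show "((fst \<circ> the_inv_into M snd) j, j) \<in> M" if "j \<in> J" for j
    using bij_betw_apply[OF bij_betw_the_inv_into[OF snd] that]
      f_the_inv_into_f_bij_betw[OF snd that] by (metis comp_apply prod.collapse)
qed

lemma is_cycle_orbit:
  assumes "permutation \<sigma>" and "\<sigma> x \<noteq> x" "\<sigma> (\<sigma> x) \<noteq> x"
    and "\<And>k. adj G ((\<sigma> ^^ k) x) (\<sigma> ((\<sigma> ^^ k) x))"
  shows "is_cycle G (map (\<lambda>k. (\<sigma> ^^ k) x) [0..<funpow_dist1 \<sigma> x x])"
proof -
  define m where "m = funpow_dist1 \<sigma> x x"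
  have orbit: "x \<in> orbit \<sigma> x"
    using assms(1) by (rule permutation_self_in_orbit)
  have return: "(\<sigma> ^^ m) x = x"
    unfolding m_def using funpow_dist1_prop[OF orbit] .
  have inj: "inj_on (\<lambda>k. (\<sigma> ^^ k) x) {0..<m}"
    unfolding m_def by (rule inj_on_funpow_dist1[OF orbit])
  from return assms(2,3) have "m \<noteq> 1" "m \<noteq> 2"
    by (auto simp: numeral_2_eq_2)
  moreover have "m \<noteq> 0"
    unfolding m_def by simp
  ultimately have "3 \<le> m"
    by linarith
  then have "Suc (m - 1) = m"
    by simp
  then have "\<sigma> ((\<sigma> ^^ (m - 1)) x) = x"
    using return by (metis funpow.simps(2) o_apply)
  then have "adj G ((\<sigma> ^^ (m - 1)) x) x"
    using assms(4)[of "m - 1"] by simp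
  with \<open>3 \<le> m\<close> inj assms(4) show ?thesis
    unfolding is_cycle_def m_def[symmetric] by (simp add: distinct_map last_map hd_map)
qed

lemma alternating_permutes:
  assumes "finite I" "bij_betw \<mu> I J" "bij_betw \<nu> J I"
  shows "(\<lambda>v. if v \<in> vset I J then case_sum (Inr \<circ> \<mu>) (Inl \<circ> \<nu>) v else v) permutes vset I J"
    (is "?\<sigma> permutes _")
proof (rule inj_imp_permutes)
  show "finite (vset I J)"
    using assms bij_betw_finite unfolding vset_def by blast
  from assms(2,3) have "inj_on \<mu> I" "inj_on \<nu> J"
    by (simp_all add: bij_betw_def)
  then show "inj_on ?\<sigma> (vset I J)"
  proof (intro inj_onI)
    fix v w assume "v \<in> vset I J" "w \<in> vset I J" "?\<sigma> v = ?\<sigma> w"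
    with \<open>inj_on \<mu> I\<close> \<open>inj_on \<nu> J\<close> show "v = w"
      by (cases v; cases w) (auto simp: vset_def dest: inj_onD)
  qed
  show "?\<sigma> v \<in> vset I J" if "v \<in> vset I J" for v
    using that bij_betw_apply[OF assms(2)] bij_betw_apply[OF assms(3)] unfolding vset_def by auto
qed simp

lemma perfect_matching_in_acyclic_subset:
  assumes "acyclic_graph G" "finite I"
    and M: "perfect_matching_in G I J M" and M': "perfect_matching_in G I J M'"
  shows "M \<subseteq> M'"
proof (rule subrelI, rule ccontr)
  fix a b assume ab: "(a, b) \<in> M" "(a, b) \<notin> M'"
  obtain \<mu> where \<mu>: "bij_betw \<mu> I J" "\<And>i. i \<in> I \<Longrightarrow> (i, \<mu> i) \<in> M"
    using perfect_matching_in_partners[OF M] by blast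
  obtain \<nu> where \<nu>: "bij_betw \<nu> J I" "\<And>j. j \<in> J \<Longrightarrow> (\<nu> j, j) \<in> M'"
    using perfect_matching_in_partners[OF M'] by blast
  \<comment> \<open>From the left \<sigma> follows M, from the right M'; its orbit through Inl a is an alternating
    cycle, which has length at least 4 because (a, b) \<notin> M'.\<close>
  define \<sigma> where "\<sigma> = (\<lambda>v. if v \<in> vset I J then case_sum (Inr \<circ> \<mu>) (Inl \<circ> \<nu>) v else v)"
  have \<sigma>: "\<sigma> permutes vset I J"
    unfolding \<sigma>_def using alternating_permutes[OF assms(2) \<mu>(1) \<nu>(1)] .
  have "finite (vset I J)"
    using assms(2) \<mu>(1) bij_betw_finite unfolding vset_def by blast
  with \<sigma> have "permutation \<sigma>"
    by (auto simp: permutation_permutes)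
  from M M' ab(1) have MG: "M \<subseteq> G" "M' \<subseteq> G" and "a \<in> I" "b \<in> J"
    and "\<forall>i\<in>I. \<exists>!j. (i, j) \<in> M"
    unfolding perfect_matching_in_def by auto
  with ab(1) \<mu>(2) have "\<mu> a = b"
    by blast
  with \<open>a \<in> I\<close> \<open>b \<in> J\<close> have "\<sigma> (Inl a) = Inr b" "\<sigma> (\<sigma> (Inl a)) = Inl (\<nu> b)"
    unfolding \<sigma>_def vset_def by auto
  moreover have "\<nu> b \<noteq> a"
    using \<nu>(2)[OF \<open>b \<in> J\<close>] ab(2) by auto
  moreover have "adj G v (\<sigma> v)" if "v \<in> vset I J" for v
    using that \<mu>(2) \<nu>(2) MG unfolding \<sigma>_def vset_def
    by (auto simp: adj_commute[of G "Inr _"] intro!: adj_edge) blast+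
  then have "adj G ((\<sigma> ^^ k) (Inl a)) (\<sigma> ((\<sigma> ^^ k) (Inl a)))" for k
    using permutes_in_funpow_image[OF \<sigma>] \<open>a \<in> I\<close> unfolding vset_def by blast
  ultimately have "is_cycle G (map (\<lambda>k. (\<sigma> ^^ k) (Inl a)) [0..<funpow_dist1 \<sigma> (Inl a) (Inl a)])"
    by (intro is_cycle_orbit[OF \<open>permutation \<sigma>\<close>]) auto
  with assms(1) show False
    unfolding acyclic_graph_def by blast
qed

lemma perfect_matching_in_unique_if_acyclic:
  assumes "acyclic_graph G" "finite I"
    and "perfect_matching_in G I J M" "perfect_matching_in G I J M'"
  shows "M = M'"
  using perfect_matching_in_acyclic_subset[OF assms] perfect_matching_in_acyclic_subset[OF assms(1,2,4,3)]
  by (rule antisym)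

definition link :: "vert \<Rightarrow> vert \<Rightarrow> edge set" where
  "link u v = {(i, j). (u = Inl i \<and> v = Inr j) \<or> (u = Inr j \<and> v = Inl i)}"

fun path_matching :: "vert list \<Rightarrow> edge set" where
  "path_matching (u # v # vs) = link u v \<union> path_matching vs"
| "path_matching _ = {}"

lemma path_matching_perfect:
  "walk G vs \<Longrightarrow> distinct vs \<Longrightarrow> even (length vs) \<Longrightarrow>
    perfect_matching_in G (Inl -` set vs) (Inr -` set vs) (path_matching vs)"
proof (induction vs rule: path_matching.induct)
  case (1 u v vs)
  then have IH: "perfect_matching_in G (Inl -` set vs) (Inr -` set vs) (path_matching vs)"
    by (auto simp: walk_Cons)
  from "1.prems"(1) obtain i j where ij: "(i, j) \<in> G"
    "(u = Inl i \<and> v = Inr j) \<or> (u = Inr j \<and> v = Inl i)"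
    by (auto simp: adj_def)
  with "1.prems"(2) have "i \<notin> Inl -` set vs" "j \<notin> Inr -` set vs"
    by auto
  moreover from ij(2) have "path_matching (u # v # vs) = insert (i, j) (path_matching vs)"
    "Inl -` set (u # v # vs) = insert i (Inl -` set vs)"
    "Inr -` set (u # v # vs) = insert j (Inr -` set vs)"
    by (auto simp: link_def)
  ultimately show ?case
    using perfect_matching_in_insert[OF IH ij(1)] by simp
qed (auto simp: perfect_matching_in_def)

lemma link_subset_path_matching:
  "even (length us) \<Longrightarrow> link u v \<subseteq> path_matching (us @ u # v # vs)"
  by (induction us rule: path_matching.induct) auto

lemma card_image_Int_eq:
  assumes "inj_on f M" "inj_on g M"
  shows "card (g ` M \<inter> Q) = card (f ` {p \<in> M. g p \<in> Q})"
proof -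
  have "g ` M \<inter> Q = g ` {p \<in> M. g p \<in> Q}"
    by blast
  then show ?thesis
    using assms by (simp add: card_image inj_on_subset)
qed

lemma perfect_matching_in_cut_card_le:
  assumes M: "perfect_matching_in (insert e H) I J M" and "finite I"
    and H: "\<And>a b. (a, b) \<in> H \<Longrightarrow> a \<in> P \<longleftrightarrow> b \<in> Q" and e: "fst e \<in> P" "snd e \<notin> Q"
  shows "card (J \<inter> Q) \<le> card (I \<inter> P)" and "e \<in> M \<Longrightarrow> card (J \<inter> Q) < card (I \<inter> P)"
proof -
  from M have sub: "M \<subseteq> insert e H" and fst: "bij_betw fst M I" and snd: "bij_betw snd M J"
    by (simp_all add: perfect_matching_in_iff_bij_betw)
  define N where "N = {p \<in> M. snd p \<in> Q}"
  have card: "card (J \<inter> Q) = card (fst ` N)"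
    using card_image_Int_eq[of fst M snd Q] fst snd unfolding N_def bij_betw_def by simp
  have "fst ` N \<subseteq> I \<inter> P"
    using sub fst e H unfolding N_def bij_betw_def by force
  then show "card (J \<inter> Q) \<le> card (I \<inter> P)"
    unfolding card using \<open>finite I\<close> by (simp add: card_mono)
  assume "e \<in> M"
  with fst e have "fst e \<in> I \<inter> P - fst ` N"
    unfolding N_def bij_betw_def by (auto dest: inj_onD)
  with \<open>fst ` N \<subseteq> I \<inter> P\<close> show "card (J \<inter> Q) < card (I \<inter> P)"
    unfolding card using \<open>finite I\<close> by (metis Diff_iff psubsetI psubset_card_mono finite_Int)
qed

lemma compatible_if_opposite_crossings:
  assumes "acyclic_graph H" and H: "\<And>a b. (a, b) \<in> H \<Longrightarrow> a \<in> P \<longleftrightarrow> b \<in> Q"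
    and "fst e \<in> P" "snd e \<notin> Q" "fst e' \<notin> P" "snd e' \<in> Q"
  shows "compatible n d (insert e H) (insert e' H)"
  unfolding compatible_def
proof (intro allI impI)
  fix I J M M'
  assume "I \<subseteq> {1..n}" "J \<subseteq> {1..d}"
    and M: "perfect_matching_in (insert e H) I J M" and M': "perfect_matching_in (insert e' H) I J M'"
  then have "finite I" "finite J"
    by (auto intro: finite_subset)
  have "card I = card J"
    using M by (metis perfect_matching_in_iff_bij_betw bij_betw_same_card)
  moreover have "card (J \<inter> Q) \<le> card (I \<inter> P)" "e \<in> M \<Longrightarrow> card (J \<inter> Q) < card (I \<inter> P)"
    using perfect_matching_in_cut_card_le[OF M \<open>finite I\<close> H] assms(3,4) by auto
  moreover have "card (J - Q) \<le> card (I - P)" "e' \<in> M' \<Longrightarrow> card (J - Q) < card (I - P)"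
    using perfect_matching_in_cut_card_le[OF M' \<open>finite I\<close>, of "- P" "- Q"] H assms(5,6)
    by (auto simp: Diff_eq)
  moreover have "card I = card (I \<inter> P) + card (I - P)" "card J = card (J \<inter> Q) + card (J - Q)"
    using \<open>finite I\<close> \<open>finite J\<close> by (simp_all add: card_Int_Diff)
  ultimately have "e \<notin> M" "e' \<notin> M'"
    by linarith+
  with M M' have "perfect_matching_in H I J M" "perfect_matching_in H I J M'"
    unfolding perfect_matching_in_def by auto
  with assms(1) \<open>finite I\<close> show "M = M'"
    by (rule perfect_matching_in_unique_if_acyclic)
qed

lemma not_compatible_if_parallel_crossings:
  assumes G: "insert (i, j) H \<subseteq> Kedges n d" and "(i, j) \<notin> H" "(i, j) \<noteq> (i', j')"
    and "connected_in H (Inl i) (Inl i')" "connected_in H (Inr j) (Inr j')"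
    and "\<not> connected_in H (Inl i) (Inr j)"
  shows "\<not> compatible n d (insert (i, j) H) (insert (i', j') H)"
proof
  assume compatible: "compatible n d (insert (i, j) H) (insert (i', j') H)"
  obtain P where P: "walk H P" "distinct P" "P \<noteq> []" "hd P = Inl i" "last P = Inl i'"
    using connected_in_imp_distinct_walk[OF assms(4)] by blast
  obtain W where W: "walk H W" "distinct W" "W \<noteq> []" "hd W = Inr j" "last W = Inr j'"
    using connected_in_imp_distinct_walk[OF assms(5)] by blast
  have "odd (length P)" "odd (length W)"
    using walk_odd_length_iff P W by auto
  have "set P \<inter> set W = {}"
  proof (rule ccontr)
    assume "set P \<inter> set W \<noteq> {}"
    then obtain v where "v \<in> set P" "v \<in> set W"
      by blast
    then have "connected_in H (Inl i) v" "connected_in H (Inr j) v"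
      using walk_connected_in P W by metis+
    with assms(6) show False
      by (metis connected_in_sym connected_in_trans)
  qed
  \<comment> \<open>L and L' list the even cycle formed by P, W, e and e', cut open at e' and at e
    respectively; their path matchings are its two alternating perfect matchings.\<close>
  define L where "L = rev P @ W"
  define L' where "L' = P @ rev W"
  have "walk (insert (i, j) H) L" "walk (insert (i', j') H) L'"
    unfolding L_def L'_def walk_append walk_rev using P W
    by (auto simp: last_rev hd_rev intro: walk_mono adj_edge)
  moreover have "distinct L" "distinct L'" "even (length L)" "even (length L')"
    using P W \<open>set P \<inter> set W = {}\<close> \<open>odd (length P)\<close> \<open>odd (length W)\<close>
    by (auto simp: L_def L'_def)
  moreover have "set L' = set L"
    by (auto simp: L_def L'_def)
  ultimately have M: "perfect_matching_in (insert (i, j) H) (Inl -` set L) (Inr -` set L) (path_matching L)"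
    and M': "perfect_matching_in (insert (i', j') H) (Inl -` set L) (Inr -` set L) (path_matching L')"
    using path_matching_perfect by (metis, metis)
  moreover have "Inl -` set L \<subseteq> {1..n}" "Inr -` set L \<subseteq> {1..d}"
    using M G unfolding perfect_matching_in_def Kedges_def by blast+
  ultimately have "path_matching L = path_matching L'"
    using compatible unfolding compatible_def by blast
  moreover have "L = rev (tl P) @ Inl i # Inr j # tl W"
    using P W by (cases P; cases W) (auto simp: L_def)
  then have "(i, j) \<in> path_matching L"
    using link_subset_path_matching[of "rev (tl P)" "Inl i" "Inr j" "tl W"] \<open>odd (length P)\<close>
    by (auto simp: link_def)
  moreover have "(i, j) \<notin> path_matching L'"
    using M' assms(2,3) unfolding perfect_matching_in_def by auto
  ultimately show False
    by simp
qed

lemma spanning_tree_insert_crossing: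
  assumes "spanning_tree n d (insert (i, j) H)" and "components n d H = {C, D}" "C \<noteq> D"
  shows "Inr j \<in> C \<longleftrightarrow> Inl i \<notin> C"
proof -
  obtain u v where "u \<in> Kverts n d" "v \<in> Kverts n d" "\<not> connected_in H u v"
    using two_components_not_connected[OF assms(2,3)] .
  with assms(1) have "\<not> connected_in H (Inl i) (Inr j)"
    using connected_in_insert unfolding spanning_tree_def by blast
  moreover have "Inl i \<in> Kverts n d" "Inr j \<in> Kverts n d"
    using assms(1) Kedges_imp_Kverts unfolding spanning_tree_def by blast+
  ultimately show ?thesis
    using connected_in_iff_two_components[OF assms(2,3)] by blast
qed

lemma compatible_iff_opposite_sides:
  assumes G: "spanning_tree n d (insert (i, j) H)" and G': "spanning_tree n d (insert (i', j') H)"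
    and "(i, j) \<notin> H" "(i, j) \<noteq> (i', j')"
    and C: "components n d H = {C, D}" "C \<noteq> D"
  shows "compatible n d (insert (i, j) H) (insert (i', j') H) \<longleftrightarrow> (Inl i \<in> C \<longleftrightarrow> Inl i' \<notin> C)"
proof -
  from G G' have "acyclic_graph H" and K: "insert (i, j) H \<subseteq> Kedges n d" "insert (i', j') H \<subseteq> Kedges n d"
    unfolding spanning_tree_def by (auto intro: acyclic_graph_subset)
  then have verts: "Inl i \<in> Kverts n d" "Inr j \<in> Kverts n d" "Inl i' \<in> Kverts n d" "Inr j' \<in> Kverts n d"
    using Kedges_imp_Kverts by blast+
  note side = connected_in_iff_two_components[OF C]
  have cross: "Inr j \<in> C \<longleftrightarrow> Inl i \<notin> C" "Inr j' \<in> C \<longleftrightarrow> Inl i' \<notin> C"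
    using spanning_tree_insert_crossing[OF G C] spanning_tree_insert_crossing[OF G' C] .
  show ?thesis
  proof (cases "Inl i \<in> C \<longleftrightarrow> Inl i' \<in> C")
    case True
    with side verts cross have "connected_in H (Inl i) (Inl i')" "connected_in H (Inr j) (Inr j')"
      and "\<not> connected_in H (Inl i) (Inr j)"
      by auto
    with K(1) assms(3,4) True show ?thesis
      using not_compatible_if_parallel_crossings by auto
  next
    case False
    have "a \<in> Inl -` C \<longleftrightarrow> b \<in> Inr -` C" if "(a, b) \<in> H" for a b
      using side[of "Inl a" "Inr b"] connected_in_adj[OF adj_edge[OF that]] K Kedges_imp_Kverts that
      by auto
    with False cross show ?thesis
      using compatible_if_opposite_crossings[OF \<open>acyclic_graph H\<close>, of "Inl -` C" "Inr -` C"]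
        compatible_if_opposite_crossings[OF \<open>acyclic_graph H\<close>, of "- Inl -` C" "- Inr -` C"]
      by (cases "Inl i \<in> C") auto
  qed
qed

theorem mainTheorem1:
  fixes n d :: nat and G G' H :: "edge set" and e e' :: edge
    and I1 J1 I2 J2 :: "nat set"
  assumes "n \<ge> 1" and "d \<ge> 1"
    and "spanning_tree n d G" and "spanning_tree n d G'" and "G \<noteq> G'"
    and "e \<in> G" and "e' \<in> G'"
    and "G - {e} = H" and "G' - {e'} = H"
    and "components n d H = {vset I1 J1, vset I2 J2}"
    and "vset I1 J1 \<noteq> vset I2 J2"
  shows "(compatible n d G G' \<longleftrightarrow>
            ((fst e \<in> I1 \<and> snd e \<in> J2 \<and> fst e' \<in> I2 \<and> snd e' \<in> J1)
             \<or> (fst e \<in> I2 \<and> snd e \<in> J1 \<and> fst e' \<in> I1 \<and> snd e' \<in> J2)))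
       \<and> (compatible n d G G' \<longrightarrow> fst e \<noteq> fst e' \<and> snd e \<noteq> snd e')"
proof -
  obtain i j i' j' where e: "e = (i, j)" and e': "e' = (i', j')"
    by fastforce
  have G: "G = insert (i, j) H" "G' = insert (i', j') H" and "(i, j) \<notin> H" "(i, j) \<noteq> (i', j')"
    using assms(5-9) e e' by auto
  with assms(3,4) have "i \<in> {1..n}" "i' \<in> {1..n}" "j \<in> {1..d}" "j' \<in> {1..d}"
    unfolding spanning_tree_def Kedges_def by auto
  moreover have "compatible n d G G' \<longleftrightarrow> (i \<in> I1 \<longleftrightarrow> i' \<notin> I1)"
    using compatible_iff_opposite_sides[OF assms(3,4)[unfolded G] \<open>(i, j) \<notin> H\<close> \<open>(i, j) \<noteq> (i', j')\<close> assms(10,11)]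
    unfolding G by simp
  moreover have "j \<in> J1 \<longleftrightarrow> i \<notin> I1" "j' \<in> J1 \<longleftrightarrow> i' \<notin> I1"
    using spanning_tree_insert_crossing[OF assms(3)[unfolded G] assms(10,11)]
      spanning_tree_insert_crossing[OF assms(4)[unfolded G] assms(10,11)]
    by simp_all
  ultimately show ?thesis
    using two_components_vset_complement[OF assms(10,11)] e e' by auto
qed

end
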